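(* Let $A=\{a_{ij}: i,j\ge1\}$ with $a_{ij}\prec a_{kl}$ iff $j=k$. For a permutation $\sigma\in\mathfrak S_n$ define $$\mathbf S^\sigma(A)=\sum_{i_1,\dots,i_n\ge1}a_{i_{\sigma^{-1}(1)}i_1}a_{i_{\sigma^{-1}(2)}i_2}\cdots a_{i_{\sigma^{-1}(n)}i_n}.$$ Then: (i) $\mathbf S^\sigma(A)$ equals the sum of all words $w_1\cdots w_n$ over $A$ with $w_j\prec w_{\sigma(j)}$ for all $j\in[n]$; (ii) the $\mathbf S^\sigma$, $\sigma$ ranging over all permutations of all $[n]$, $n\ge0$, are linearly independent; (iii) $\mathbf S^\sigma\mathbf S^\tau=\mathbf S^{\sigma\bullet\tau}$; (iv) defining $\mathbf S^\sigma(A\oplus B)$ as the sum of all words $w$ over $A\oplus B$ with $w_j\prec w_{\sigma(j)}$ for all $j$, and letting letters of $A$ commute with those of $B$, $$\mathbf S^\sigma(A\oplus B)=\sum_{C}\mathbf S^{\mathrm{std}(\sigma_{|[n]\setminus U_C})}(A)\,\mathbf S^{\mathrm{std}(\sigma_{|U_C})}(B),$$ the sum over all sets $C$ of cycles of $\sigma$, where $U_C$ is the union of the supports of the cycles in $C$. Thus the span of the $\mathbf S^\sigma$ with coproduct $\Delta F=F(A\oplus B)$ is a Hopf algebra isomorphic to the Grossman–Larson-type cocommutative Hopf algebra $\mathbf{SGSym}$ of permutations.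
   Context: $\sigma\bullet\tau$ denotes shifted concatenation: for $\sigma\in\mathfrak S_n,\tau\in\mathfrak S_m$, the permutation of $[n+m]$ with word $\sigma(1)\cdots\sigma(n)(\tau(1)+n)\cdots(\tau(m)+n)$. $B=\{b_{ij}:i,j\ge1\}$ is a disjoint copy of $A$ with the same relation; $A\oplus B$ is the disjoint union with the relations of $A$ and of $B$ together with $a\prec b$ for all $a\in A$, $b\in B$ (never $b\prec a$). For $U\subseteq[n]$ stable under a function $f$, $\mathrm{std}(f_{|U})=\tau_U\circ f_{|U}\circ\tau_U^{-1}$ where $\tau_U:U\to[|U|]$ is the increasing bijection. $\mathbf{SGSym}$ is the Hopf algebra with basis $\mathbf S^\sigma$ (all permutations), product $\mathbf S^\sigma\mathbf S^\tau=\mathbf S^{\sigma\bullet\tau}$ and coproduct obtained by splitting the set of cycles of $\sigma$ in two parts in all ways and standardizing, as in (iv). *)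

theory Defs
  imports "HOL-Combinatorics.Permutations"
begin

text \<open>Letters a_ij are pairs (i,j) of positive naturals.
  Noncommutative formal series with coefficients in 'k are functions word => 'k.
  Word positions are 1-based in the paper: w_j is w ! (j - 1).\<close>

type_synonym letter = "nat \<times> nat"

definition letters :: "letter set" where
  "letters = {(i, j). 1 \<le> i \<and> 1 \<le> j}"

definition prec :: "letter \<Rightarrow> letter \<Rightarrow> bool" where
  "prec x y \<longleftrightarrow> snd x = fst y"

text \<open>S^sigma(A) defined by the sum formula: the coefficient of a word w is the
  number of index tuples (i_1,...,i_n) of positive integers whose monomial
  a_{i_{sigma^-1(1)} i_1} ... a_{i_{sigma^-1(n)} i_n} equals w.
  Tuples are encoded as functions vanishing outside {1..n}.\<close>
definition S :: "(nat \<Rightarrow> nat) \<Rightarrow> nat \<Rightarrow> letter list \<Rightarrow> 'k::comm_ring_1" where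
  "S \<sigma> n w = of_nat (card {i :: nat \<Rightarrow> nat.
      (\<forall>j\<in>{1..n}. 1 \<le> i j) \<and> (\<forall>j. j \<notin> {1..n} \<longrightarrow> i j = 0) \<and>
      w = map (\<lambda>j. (i (inv_into {1..n} \<sigma> j), i j)) [1..<n+1]})"

definition S_words :: "(nat \<Rightarrow> nat) \<Rightarrow> nat \<Rightarrow> letter list \<Rightarrow> 'k::comm_ring_1" where
  "S_words \<sigma> n w = (if w \<in> lists letters \<and> length w = n \<and>
      (\<forall>j\<in>{1..n}. prec (w ! (j - 1)) (w ! (\<sigma> j - 1))) then 1 else 0)"

definition series_mult :: "(letter list \<Rightarrow> 'k::comm_ring_1) \<Rightarrow> (letter list \<Rightarrow> 'k) \<Rightarrow> letter list \<Rightarrow> 'k" where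
  "series_mult F G w = (\<Sum>k\<in>{0..length w}. F (take k w) * G (drop k w))"

definition shift_concat :: "(nat \<Rightarrow> nat) \<Rightarrow> nat \<Rightarrow> (nat \<Rightarrow> nat) \<Rightarrow> nat \<Rightarrow> nat \<Rightarrow> nat" where
  "shift_concat \<sigma> n \<tau> m = (\<lambda>i. if 1 \<le> i \<and> i \<le> n then \<sigma> i
      else if n < i \<and> i \<le> n + m then \<tau> (i - n) + n else i)"

text \<open>Alphabet A \<oplus> B: Inl (i,j) = a_ij, Inr (i,j) = b_ij.\<close>
fun precAB :: "letter + letter \<Rightarrow> letter + letter \<Rightarrow> bool" where
  "precAB (Inl x) (Inl y) = prec x y"
| "precAB (Inr x) (Inr y) = prec x y"
| "precAB (Inl x) (Inr y) = True"
| "precAB (Inr x) (Inl y) = False"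

definition S_AB :: "(nat \<Rightarrow> nat) \<Rightarrow> nat \<Rightarrow> (letter + letter) list \<Rightarrow> 'k::comm_ring_1" where
  "S_AB \<sigma> n w = (if w \<in> lists (Inl ` letters \<union> Inr ` letters) \<and> length w = n \<and>
      (\<forall>j\<in>{1..n}. precAB (w ! (j - 1)) (w ! (\<sigma> j - 1))) then 1 else 0)"

text \<open>Letting letters of A commute with letters of B: the image of a series over
  A \<oplus> B in K<A> \<otimes> K<B>; coefficient of u \<otimes> v is the sum of the coefficients
  of all words whose A-subword is u and whose B-subword is v.\<close>
definition projA :: "(letter + letter) list \<Rightarrow> letter list" where
  "projA w = map projl (filter isl w)"
definition projB :: "(letter + letter) list \<Rightarrow> letter list" where
  "projB w = map projr (filter (\<lambda>x. \<not> isl x) w)"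

definition commute_image :: "((letter + letter) list \<Rightarrow> 'k::comm_ring_1) \<Rightarrow> letter list \<Rightarrow> letter list \<Rightarrow> 'k" where
  "commute_image F u v = (\<Sum>w\<in>{w. projA w = u \<and> projB w = v}. F w)"

text \<open>Cycles of sigma (as their supports, fixed points included) and standardization.\<close>
definition orbit_of :: "(nat \<Rightarrow> nat) \<Rightarrow> nat \<Rightarrow> nat set" where
  "orbit_of \<sigma> x = {(\<sigma> ^^ k) x | k. True}"

definition cycles :: "(nat \<Rightarrow> nat) \<Rightarrow> nat \<Rightarrow> nat set set" where
  "cycles \<sigma> n = {orbit_of \<sigma> x | x. x \<in> {1..n}}"

definition rank :: "nat set \<Rightarrow> nat \<Rightarrow> nat" where
  "rank U x = card {y \<in> U. y \<le> x}"

definition std :: "(nat \<Rightarrow> nat) \<Rightarrow> nat set \<Rightarrow> nat \<Rightarrow> nat" where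
  "std f U = (\<lambda>k. if k \<in> {1..card U} then rank U (f (the_inv_into U (rank U) k)) else k)"

end

theory Submission
  imports Defs "HOL-Combinatorics.Orbits"
begin

(* The four parts of the theorem all rest on one observation: a word w_1...w_n over A
   is produced by the index tuple (i_1,...,i_n) of the defining sum of S^sigma iff its
   j-th letter is a_{i_{sigma^-1(j)} i_j}, so the tuple is read off from the second
   indices of w and exists iff w_j \<prec> w_sigma(j) for all j ("w is sigma-admissible").
   This gives (i), and every S^sigma is the 0/1 characteristic series of its
   admissible words.  Then:
   (ii) the word a_{sigma^-1(1),1} ... a_{sigma^-1(n),n} is admissible for sigma only;
   (iii) admissibility for sigma \<bullet> tau splits into admissibility of the prefix of
       length n for sigma and of the suffix for tau;
   (iv) a word w over A \<oplus> B is determined by its A- and B-subwords and the set U of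
       positions of B-letters; it is admissible iff U is sigma-stable and both subwords
       are admissible for the standardized restrictions of sigma.  The sigma-stable
       subsets of [n] are exactly the unions of sets of cycles, so reindexing the sum
       over words by U and the sum over sets of cycles by their union gives (iv). *)

lemma permutes_interval_facts:
  assumes p: "\<sigma> permutes {1..n}" and j: "j \<in> {1..n}"
  shows "inv_into {1..n} \<sigma> j \<in> {1..n}" "\<sigma> (inv_into {1..n} \<sigma> j) = j"
    "inv_into {1..n} \<sigma> (\<sigma> j) = j" "\<sigma> j \<in> {1..n}"
proof -
  have b: "bij_betw \<sigma> {1..n} {1..n}" using p by (rule permutes_imp_bij)
  show "inv_into {1..n} \<sigma> j \<in> {1..n}" using b j by (metis bij_betw_imp_surj_on inv_into_into)
  show "\<sigma> (inv_into {1..n} \<sigma> j) = j" using b j by (simp add: bij_betw_inv_into_right)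
  show "inv_into {1..n} \<sigma> (\<sigma> j) = j" using b j by (simp add: bij_betw_inv_into_left)
  show "\<sigma> j \<in> {1..n}" using permutes_in_image[OF p] j by blast
qed

lemma permutes_eqI:
  assumes "\<sigma> permutes X" "\<tau> permutes X" "\<forall>x\<in>X. \<sigma> x = \<tau> x"
  shows "\<sigma> = \<tau>"
proof
  fix x show "\<sigma> x = \<tau> x"
    using assms by (cases "x \<in> X") (auto simp: permutes_not_in)
qed

lemma set_map_upt: "x \<in> set (map f [1..<n+1]) \<Longrightarrow> \<exists>j\<in>{1..n}. x = f j"
  by (auto simp del: upt_Suc)

lemma map_upt_nth: "j \<in> {1..n} \<Longrightarrow> map f [1..<n+1] ! (j - 1) = f j"
  by (subst nth_map) (auto simp del: upt_Suc)

section \<open>Part (i): \<open>S\<^sup>\<sigma>\<close> is the sum of the admissible words\<close>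

definition admissible :: "(nat \<Rightarrow> nat) \<Rightarrow> nat \<Rightarrow> letter list \<Rightarrow> bool" where
  "admissible \<sigma> n w \<longleftrightarrow> w \<in> lists letters \<and> length w = n \<and>
      (\<forall>j\<in>{1..n}. prec (w ! (j - 1)) (w ! (\<sigma> j - 1)))"

lemma S_words_admissible: "S_words \<sigma> n w = (if admissible \<sigma> n w then 1 else 0)"
  by (simp add: S_words_def admissible_def)

definition index_tuples :: "(nat \<Rightarrow> nat) \<Rightarrow> nat \<Rightarrow> letter list \<Rightarrow> (nat \<Rightarrow> nat) set" where
  "index_tuples \<sigma> n w = {i.
      (\<forall>j\<in>{1..n}. 1 \<le> i j) \<and> (\<forall>j. j \<notin> {1..n} \<longrightarrow> i j = 0) \<and>
      w = map (\<lambda>j. (i (inv_into {1..n} \<sigma> j), i j)) [1..<n+1]}"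

lemma S_index_tuples: "S \<sigma> n w = of_nat (card (index_tuples \<sigma> n w))"
  by (simp add: S_def index_tuples_def)

text \<open>The only candidate tuple: the second indices of the letters of \<open>w\<close>.\<close>
definition column_tuple :: "nat \<Rightarrow> letter list \<Rightarrow> nat \<Rightarrow> nat" where
  "column_tuple n w j = (if j \<in> {1..n} then snd (w ! (j - 1)) else 0)"

lemma index_tuplesD:
  assumes "i \<in> index_tuples \<sigma> n w"
  shows "\<And>j. j \<in> {1..n} \<Longrightarrow> 1 \<le> i j" "\<And>j. j \<notin> {1..n} \<Longrightarrow> i j = 0"
    "w = map (\<lambda>j. (i (inv_into {1..n} \<sigma> j), i j)) [1..<n+1]"
  using assms unfolding index_tuples_def by blast+

lemma index_tuples_nth:
  assumes "i \<in> index_tuples \<sigma> n w" "j \<in> {1..n}"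
  shows "w ! (j - 1) = (i (inv_into {1..n} \<sigma> j), i j)"
  by (subst index_tuplesD(3)[OF assms(1)]) (rule map_upt_nth[OF assms(2)])

lemma index_tuples_unique:
  assumes i: "i \<in> index_tuples \<sigma> n w"
  shows "i = column_tuple n w"
proof
  fix j
  show "i j = column_tuple n w j"
  proof (cases "j \<in> {1..n}")
    case True
    then show ?thesis using index_tuples_nth[OF i True] by (simp add: column_tuple_def)
  next
    case False
    then show ?thesis using index_tuplesD(2)[OF i] by (auto simp: column_tuple_def)
  qed
qed

lemma index_tuples_admissible:
  assumes p: "\<sigma> permutes {1..n}" and i: "i \<in> index_tuples \<sigma> n w"
  shows "admissible \<sigma> n w"
proof -
  have "set w \<subseteq> letters"
  proof
    fix x assume "x \<in> set w"
    then have "x \<in> set (map (\<lambda>j. (i (inv_into {1..n} \<sigma> j), i j)) [1..<n+1])"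
      by (subst (asm) index_tuplesD(3)[OF i])
    then obtain j where j: "j \<in> {1..n}" and x: "x = (i (inv_into {1..n} \<sigma> j), i j)"
      by (blast dest: set_map_upt)
    show "x \<in> letters"
      using index_tuplesD(1)[OF i] j permutes_interval_facts(1)[OF p j] by (simp add: x letters_def)
  qed
  moreover have "length w = n" by (subst index_tuplesD(3)[OF i]) simp
  moreover have "prec (w ! (j - 1)) (w ! (\<sigma> j - 1))" if j: "j \<in> {1..n}" for j
    using index_tuples_nth[OF i j] index_tuples_nth[OF i permutes_interval_facts(4)[OF p j]]
      permutes_interval_facts(3)[OF p j] by (simp add: prec_def)
  ultimately show ?thesis unfolding admissible_def lists_eq_set by blast
qed

lemma column_tuple_index:
  assumes p: "\<sigma> permutes {1..n}" and a: "admissible \<sigma> n w"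
  shows "column_tuple n w \<in> index_tuples \<sigma> n w"
proof -
  let ?i = "column_tuple n w" and ?inv = "inv_into {1..n} \<sigma>"
  have len: "length w = n" and lett: "set w \<subseteq> letters"
    and ch: "\<forall>j\<in>{1..n}. prec (w ! (j - 1)) (w ! (\<sigma> j - 1))"
    using a by (auto simp: admissible_def)
  have "1 \<le> ?i j" if j: "j \<in> {1..n}" for j
  proof -
    have "w ! (j - 1) \<in> letters" using j len lett by auto
    then show ?thesis using j by (auto simp: column_tuple_def letters_def)
  qed
  moreover have "w = map (\<lambda>j. (?i (?inv j), ?i j)) [1..<n+1]"
  proof (rule nth_equalityI)
    show "length w = length (map (\<lambda>j. (?i (?inv j), ?i j)) [1..<n+1])" using len by simp
  next
    fix k assume "k < length w"
    then have j: "Suc k \<in> {1..n}" using len by simp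
    have ij: "?inv (Suc k) \<in> {1..n}" "\<sigma> (?inv (Suc k)) = Suc k"
      using permutes_interval_facts[OF p j] by auto
    have "fst (w ! k) = snd (w ! (?inv (Suc k) - 1))"
      using ch ij by (force simp: prec_def)
    then show "w ! k = map (\<lambda>j. (?i (?inv j), ?i j)) [1..<n+1] ! k"
      using map_upt_nth[OF j, of "\<lambda>j. (?i (?inv j), ?i j)"] ij(1) j
      by (simp add: column_tuple_def prod_eq_iff)
  qed
  ultimately show ?thesis by (auto simp: index_tuples_def column_tuple_def)
qed

text \<open>Part (i): each admissible word arises from exactly one index tuple, others from none.\<close>
lemma S_eq_S_words:
  assumes p: "\<sigma> permutes {1..n}"
  shows "S \<sigma> n w = S_words \<sigma> n w"
proof (cases "admissible \<sigma> n w")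
  case True
  then have "index_tuples \<sigma> n w = {column_tuple n w}"
    using column_tuple_index[OF p] index_tuples_unique by blast
  then show ?thesis using True by (simp add: S_index_tuples S_words_admissible)
next
  case False
  then have "index_tuples \<sigma> n w = {}" using index_tuples_admissible[OF p] by blast
  then show ?thesis using False by (simp add: S_index_tuples S_words_admissible)
qed

section \<open>Part (ii): linear independence\<close>

text \<open>The word \<open>a\<^bsub>\<sigma>\<^sup>-\<^sup>1(1) 1\<^esub> \<cdots> a\<^bsub>\<sigma>\<^sup>-\<^sup>1(n) n\<^esub>\<close> is admissible for \<open>\<sigma>\<close> and no other permutation.\<close>
definition witness_word :: "(nat \<Rightarrow> nat) \<Rightarrow> nat \<Rightarrow> letter list" where
  "witness_word \<sigma> n = map (\<lambda>j. (inv_into {1..n} \<sigma> j, j)) [1..<n+1]"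

lemma admissible_witness_word:
  assumes p: "\<sigma> permutes {1..n}" and q: "\<tau> permutes {1..m}"
  shows "admissible \<tau> m (witness_word \<sigma> n) \<longleftrightarrow> (m, \<tau>) = (n, \<sigma>)"
proof -
  let ?w = "witness_word \<sigma> n"
  have wj: "?w ! (j - 1) = (inv_into {1..n} \<sigma> j, j)" if "j \<in> {1..n}" for j
    unfolding witness_word_def by (rule map_upt_nth[OF that])
  have "set ?w \<subseteq> letters"
    using permutes_interval_facts(1)[OF p]
    by (auto simp: witness_word_def letters_def simp del: upt_Suc)
  then have lett: "?w \<in> lists letters" by auto
  have chain: "(\<forall>j\<in>{1..n}. prec (?w ! (j - 1)) (?w ! (\<tau> j - 1))) \<longleftrightarrow> \<tau> = \<sigma>" if mn: "m = n"
  proof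
    assume H: "\<forall>j\<in>{1..n}. prec (?w ! (j - 1)) (?w ! (\<tau> j - 1))"
    have "\<tau> j = \<sigma> j" if j: "j \<in> {1..n}" for j
    proof -
      have tj: "\<tau> j \<in> {1..n}" using permutes_interval_facts(4)[OF q] j mn by blast
      have "prec (?w ! (j - 1)) (?w ! (\<tau> j - 1))" using H j by blast
      then have "j = inv_into {1..n} \<sigma> (\<tau> j)" using wj[OF j] wj[OF tj] by (simp add: prec_def)
      then show ?thesis using permutes_interval_facts(2)[OF p tj] by simp
    qed
    then show "\<tau> = \<sigma>" using permutes_eqI[OF q[unfolded mn] p] by blast
  next
    assume "\<tau> = \<sigma>"
    show "\<forall>j\<in>{1..n}. prec (?w ! (j - 1)) (?w ! (\<tau> j - 1))"
    proof
      fix j assume j: "j \<in> {1..n}"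
      show "prec (?w ! (j - 1)) (?w ! (\<tau> j - 1))"
        using wj[OF j] wj[OF permutes_interval_facts(4)[OF p j]] permutes_interval_facts(3)[OF p j]
          \<open>\<tau> = \<sigma>\<close> by (simp add: prec_def)
    qed
  qed
  have len: "length ?w = n" by (simp add: witness_word_def)
  show ?thesis
  proof (cases "m = n")
    case True
    then show ?thesis using lett len chain[OF True] by (simp add: admissible_def)
  next
    case False
    then show ?thesis using len by (simp add: admissible_def)
  qed
qed

text \<open>Part (ii): evaluating a vanishing combination at \<open>witness_word \<sigma> n\<close> isolates \<open>c (n, \<sigma>)\<close>.\<close>
lemma S_linearly_independent:
  fixes c :: "nat \<times> (nat \<Rightarrow> nat) \<Rightarrow> 'k::comm_ring_1"
  assumes F: "finite F" "F \<subseteq> {(n, \<sigma>). \<sigma> permutes {1..n}}"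
    and zero: "\<forall>w. (\<Sum>(n, \<sigma>)\<in>F. c (n, \<sigma>) * S \<sigma> n w) = 0"
  shows "\<forall>p\<in>F. c p = 0"
proof
  fix p assume pF: "p \<in> F"
  obtain n \<sigma> where pe: "p = (n, \<sigma>)" by (cases p)
  have ps: "\<sigma> permutes {1..n}" using pF pe F(2) by blast
  have "(\<Sum>(m, \<tau>)\<in>F. c (m, \<tau>) * S \<tau> m (witness_word \<sigma> n)) = (\<Sum>q\<in>F. if q = p then c q else 0)"
  proof (rule sum.cong)
    fix q assume qF: "q \<in> F"
    obtain m \<tau> where qe: "q = (m, \<tau>)" by (cases q)
    have qs: "\<tau> permutes {1..m}" using qF qe F(2) by blast
    show "(case q of (m, \<tau>) \<Rightarrow> c (m, \<tau>) * S \<tau> m (witness_word \<sigma> n)) = (if q = p then c q else 0)"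
      using admissible_witness_word[OF ps qs] qe pe
      by (simp add: S_eq_S_words[OF qs] S_words_admissible)
  qed simp
  also have "\<dots> = c p" using pF F(1) by simp
  finally show "c p = 0" using zero by simp
qed

section \<open>Part (iii): the product\<close>

lemma shift_permutes:
  fixes \<tau> :: "nat \<Rightarrow> nat"
  assumes q: "\<tau> permutes {1..m}"
  shows "(\<lambda>i. if n < i \<and> i \<le> n + m then \<tau> (i - n) + n else i) permutes {1..n+m}"
proof -
  have b: "bij_betw (\<lambda>x. x + n) {1..m} {n+1..n+m}"
    by (rule bij_betw_byWitness[where f' = "\<lambda>x. x - n"]) auto
  have P: "(\<lambda>x. if x \<in> {n+1..n+m} then \<tau> (inv_into {1..m} (\<lambda>x. x + n) x) + n else x)
      permutes {n+1..n+m}"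
    using permutes_bij_inv_into[OF q b] by simp
  have "inv_into {1..m} (\<lambda>x. x + n) x = x - n" if "n < x" "x \<le> n + m" for x
    using that by (intro inv_into_f_eq) (auto simp: inj_on_def)
  then have "(\<lambda>x. if x \<in> {n+1..n+m} then \<tau> (inv_into {1..m} (\<lambda>x. x + n) x) + n else x)
      = (\<lambda>i. if n < i \<and> i \<le> n + m then \<tau> (i - n) + n else i)"
    by (intro ext) auto
  then show ?thesis using permutes_subset[OF P] by auto
qed

text \<open>\<open>\<sigma> \<bullet> \<tau>\<close> is \<open>\<sigma>\<close> composed with the shifted \<open>\<tau>\<close>; in particular it permutes \<open>[n+m]\<close>.\<close>
lemma shift_concat_permutes:
  assumes p: "\<sigma> permutes {1..n}" and q: "\<tau> permutes {1..m}"
  shows "shift_concat \<sigma> n \<tau> m permutes {1..n+m}"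
proof -
  let ?t = "\<lambda>i. if n < i \<and> i \<le> n + m then \<tau> (i - n) + n else i"
  have "shift_concat \<sigma> n \<tau> m i = \<sigma> (?t i)" for i
  proof (cases "n < i \<and> i \<le> n + m")
    case True
    then have "\<tau> (i - n) \<in> {1..m}" by (intro permutes_interval_facts(4)[OF q]) auto
    then have "\<sigma> (\<tau> (i - n) + n) = \<tau> (i - n) + n" by (intro permutes_not_in[OF p]) auto
    then show ?thesis using True by (simp add: shift_concat_def)
  next
    case False
    then show ?thesis using permutes_not_in[OF p, of i] by (auto simp: shift_concat_def)
  qed
  then have "shift_concat \<sigma> n \<tau> m = \<sigma> \<circ> ?t" by (simp add: fun_eq_iff)
  moreover have "\<sigma> permutes {1..n+m}" by (rule permutes_subset[OF p]) auto
  ultimately show ?thesis using permutes_compose[OF shift_permutes[OF q]] by simp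
qed

text \<open>A word is \<open>\<sigma> \<bullet> \<tau>\<close>-admissible iff its first \<open>n\<close> letters are \<open>\<sigma>\<close>-admissible and
  the remaining ones are \<open>\<tau>\<close>-admissible: the links \<open>j \<mapsto> (\<sigma> \<bullet> \<tau>)(j)\<close> never cross the cut.\<close>
lemma admissible_shift_concat:
  assumes p: "\<sigma> permutes {1..n}" and q: "\<tau> permutes {1..m}" and len: "length w = n + m"
  shows "admissible (shift_concat \<sigma> n \<tau> m) (n + m) w \<longleftrightarrow>
    admissible \<sigma> n (take n w) \<and> admissible \<tau> m (drop n w)"
proof -
  let ?sc = "shift_concat \<sigma> n \<tau> m"
  let ?link = "\<lambda>j. prec (w ! (j - 1)) (w ! (?sc j - 1))"
  have lists: "w \<in> lists letters \<longleftrightarrow> take n w \<in> lists letters \<and> drop n w \<in> lists letters"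
    by (metis append_take_drop_id append_in_lists_conv)
  have left: "?link j \<longleftrightarrow> prec (take n w ! (j - 1)) (take n w ! (\<sigma> j - 1))" if j: "j \<in> {1..n}" for j
  proof -
    have "j - 1 < n" "\<sigma> j - 1 < n" using j permutes_interval_facts(4)[OF p j] by auto
    then show ?thesis using j by (simp add: shift_concat_def)
  qed
  have right: "?link (k + n) \<longleftrightarrow> prec (drop n w ! (k - 1)) (drop n w ! (\<tau> k - 1))"
    if k: "k \<in> {1..m}" for k
    using k permutes_interval_facts(4)[OF q k] len
    by (simp add: shift_concat_def add.commute)
  have split: "(\<forall>j\<in>{1..n+m}. ?link j) \<longleftrightarrow> (\<forall>j\<in>{1..n}. ?link j) \<and> (\<forall>k\<in>{1..m}. ?link (k + n))"
  proof -
    have "{1..n+m} = {1..n} \<union> (\<lambda>k. k + n) ` {1..m}"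
      by (auto simp: image_iff intro: bexI[where x = "_ - n"])
    then show ?thesis unfolding ball_Un by (simp only:) blast
  qed
  show ?thesis
    using lists len split left right by (auto simp: admissible_def)
qed

text \<open>Part (iii): in the concatenation product only the cut after position \<open>n\<close> contributes.\<close>
lemma S_product:
  assumes p: "\<sigma> permutes {1..n}" and q: "\<tau> permutes {1..m}"
  shows "series_mult (S \<sigma> n) (S \<tau> m) =
    (S (shift_concat \<sigma> n \<tau> m) (n + m) :: letter list \<Rightarrow> 'k::comm_ring_1)"
proof
  fix w :: "letter list"
  have "series_mult (S \<sigma> n) (S \<tau> m) w
      = (\<Sum>k\<in>{0..length w}. if k = n then S_words \<sigma> n (take n w) * S_words \<tau> m (drop n w) else (0::'k))"
    unfolding series_mult_def S_eq_S_words[OF p] S_eq_S_words[OF q]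
    by (intro sum.cong) (auto simp: S_words_admissible admissible_def)
  also have "\<dots> = (if n \<le> length w then S_words \<sigma> n (take n w) * S_words \<tau> m (drop n w) else 0)"
    by (simp add: sum.delta')
  also have "\<dots> = S_words (shift_concat \<sigma> n \<tau> m) (n + m) w"
    using admissible_shift_concat[OF p q, of w]
    by (cases "length w = n + m") (auto simp: S_words_admissible admissible_def)
  also have "\<dots> = S (shift_concat \<sigma> n \<tau> m) (n + m) w"
    by (rule S_eq_S_words[OF shift_concat_permutes[OF p q], symmetric])
  finally show "series_mult (S \<sigma> n) (S \<tau> m) w = (S (shift_concat \<sigma> n \<tau> m) (n + m) w :: 'k)" .
qed

section \<open>Part (iv): the coproduct\<close>

lemma rank_strict_mono:
  assumes "finite U" "x \<in> U" "y \<in> U" "x < y"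
  shows "rank U x < rank U y"
proof -
  have "{z \<in> U. z \<le> x} \<subseteq> {z \<in> U. z \<le> y}" "y \<in> {z \<in> U. z \<le> y}" "y \<notin> {z \<in> U. z \<le> x}"
    using assms by auto
  then have "{z \<in> U. z \<le> x} \<subset> {z \<in> U. z \<le> y}" by blast
  then show ?thesis unfolding rank_def using assms(1) by (intro psubset_card_mono) auto
qed

lemma rank_inj: "finite U \<Longrightarrow> inj_on (rank U) U"
  by (metis inj_onI linorder_neqE_nat rank_strict_mono less_irrefl)

lemma rank_range:
  assumes "finite U" "x \<in> U"
  shows "rank U x \<in> {1..card U}"
proof -
  have "x \<in> {z \<in> U. z \<le> x}" using assms by auto
  then have "1 \<le> rank U x" unfolding rank_def using assms(1)
    by (metis (no_types, lifting) One_nat_def Suc_leI card_gt_0_iff empty_iff finite_subset mem_Collect_eq subsetI)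
  moreover have "rank U x \<le> card U" unfolding rank_def using assms(1) by (intro card_mono) auto
  ultimately show ?thesis by simp
qed

lemma rank_bij:
  assumes "finite U"
  shows "bij_betw (rank U) U {1..card U}"
proof -
  have "rank U ` U \<subseteq> {1..card U}" using rank_range[OF assms] by blast
  moreover have "card (rank U ` U) = card {1..card U}"
    using card_image[OF rank_inj[OF assms]] by simp
  ultimately have "rank U ` U = {1..card U}" by (intro card_subset_eq) auto
  then show ?thesis using rank_inj[OF assms] unfolding bij_betw_def by blast
qed

definition stable :: "(nat \<Rightarrow> nat) \<Rightarrow> nat set \<Rightarrow> bool" where
  "stable \<sigma> U \<longleftrightarrow> (\<forall>j\<in>U. \<sigma> j \<in> U)"

lemma stable_bij:
  assumes p: "\<sigma> permutes {1..n}" and U: "U \<subseteq> {1..n}" and st: "stable \<sigma> U"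
  shows "bij_betw \<sigma> U U"
proof -
  have inj: "inj_on \<sigma> U" using permutes_inj[OF p] by (auto simp: inj_on_def inj_def)
  have "\<sigma> ` U \<subseteq> U" using st by (auto simp: stable_def)
  moreover have "card (\<sigma> ` U) = card U" using card_image[OF inj] .
  ultimately have "\<sigma> ` U = U" using finite_subset[OF U] by (intro card_subset_eq) auto
  then show ?thesis using inj unfolding bij_betw_def by blast
qed

lemma stable_compl:
  assumes p: "\<sigma> permutes {1..n}" and U: "U \<subseteq> {1..n}" and st: "stable \<sigma> U"
  shows "stable \<sigma> ({1..n} - U)"
  unfolding stable_def
proof
  fix j assume j: "j \<in> {1..n} - U"
  have "\<sigma> j \<notin> \<sigma> ` U"
    using j permutes_inj[OF p] by (auto simp: inj_def)
  then have "\<sigma> j \<notin> U" using stable_bij[OF assms] by (simp add: bij_betw_def)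
  then show "\<sigma> j \<in> {1..n} - U" using permutes_interval_facts(4)[OF p] j by blast
qed

text \<open>For stable \<open>U\<close>, \<open>std(\<sigma>\<^sub>|\<^sub>U)\<close> is a permutation of \<open>[|U|]\<close> conjugate to \<open>\<sigma>\<^sub>|\<^sub>U\<close> by \<open>rank U\<close>.\<close>
lemma std_rank:
  assumes "finite U" "j \<in> U"
  shows "std \<sigma> U (rank U j) = rank U (\<sigma> j)"
  using assms rank_range[OF assms] the_inv_into_f_f[OF rank_inj[OF assms(1)] assms(2)]
  by (simp add: std_def)

lemma std_permutes:
  assumes p: "\<sigma> permutes {1..n}" and U: "U \<subseteq> {1..n}" and st: "stable \<sigma> U"
  shows "std \<sigma> U permutes {1..card U}"
proof -
  have fin: "finite U" using U finite_subset by blast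
  define q where "q = (\<lambda>x. if x \<in> U then \<sigma> x else x)"
  have "bij_betw q U U"
    using stable_bij[OF assms] by (subst bij_betw_cong[where g=\<sigma>]) (auto simp: q_def)
  then have qp: "q permutes U" by (rule bij_imp_permutes) (simp add: q_def)
  have rb: "bij_betw (rank U) U {1..card U}" by (rule rank_bij[OF fin])
  have "(\<lambda>x. if x \<in> {1..card U} then rank U (q (inv_into U (rank U) x)) else x) = std \<sigma> U"
  proof
    fix x
    show "(if x \<in> {1..card U} then rank U (q (inv_into U (rank U) x)) else x) = std \<sigma> U x"
    proof (cases "x \<in> {1..card U}")
      case True
      then have y: "inv_into U (rank U) x \<in> U" "rank U (inv_into U (rank U) x) = x"
        using rb by (metis bij_betw_def inv_into_into, metis bij_betw_inv_into_right)
      then have "the_inv_into U (rank U) x = inv_into U (rank U) x"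
        using the_inv_into_f_f[OF rank_inj[OF fin] y(1)] by simp
      then show ?thesis using True y by (simp add: std_def q_def)
    next
      case False
      then show ?thesis unfolding std_def by (simp only: if_not_P[OF False] if_False)
    qed
  qed
  then show ?thesis using permutes_bij_inv_into[OF qp rb] by simp
qed

lemma admissible_std:
  assumes U: "finite U"
  shows "admissible (std \<sigma> U) (card U) u \<longleftrightarrow> u \<in> lists letters \<and> length u = card U \<and>
     (\<forall>j\<in>U. prec (u ! (rank U j - 1)) (u ! (rank U (\<sigma> j) - 1)))"
proof -
  have im: "rank U ` U = {1..card U}" using rank_bij[OF U] by (simp add: bij_betw_def)
  have "(\<forall>k\<in>{1..card U}. prec (u ! (k - 1)) (u ! (std \<sigma> U k - 1))) \<longleftrightarrow>
     (\<forall>j\<in>U. prec (u ! (rank U j - 1)) (u ! (rank U (\<sigma> j) - 1)))"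
    unfolding im[symmetric] using std_rank[OF U] by auto
  then show ?thesis by (simp add: admissible_def)
qed

lemma filter_nth_card:
  "k < length xs \<Longrightarrow> P (xs ! k) \<Longrightarrow> filter P xs ! card {i. i < k \<and> P (xs ! i)} = xs ! k"
proof (induction xs arbitrary: k)
  case Nil then show ?case by simp
next
  case (Cons x xs)
  show ?case
  proof (cases k)
    case 0
    then show ?thesis using Cons.prems by simp
  next
    case (Suc k')
    have k': "k' < length xs" "P (xs ! k')" using Cons.prems Suc by auto
    have IH: "filter P xs ! card {i. i < k' \<and> P (xs ! i)} = xs ! k'" by (rule Cons.IH[OF k'])
    have e: "{k. Suc k \<in> {i. P ((x # xs) ! i)} \<and> k < k'} = {i. i < k' \<and> P (xs ! i)}" by auto
    show ?thesis
    proof (cases "P x")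
      case True
      have "card {i. i < k \<and> P ((x # xs) ! i)} = card {i \<in> {i. P ((x # xs) ! i)}. i < Suc k'}"
        using Suc by (intro arg_cong[where f=card]) auto
      also have "\<dots> = Suc (card {i. i < k' \<and> P (xs ! i)})"
        using card_less_Suc[of "{i. P ((x # xs) ! i)}" k'] True e by simp
      finally show ?thesis using True IH Suc by simp
    next
      case False
      have "card {i. i < k \<and> P ((x # xs) ! i)} = card {i \<in> {i. P ((x # xs) ! i)}. i < Suc k'}"
        using Suc by (intro arg_cong[where f=card]) auto
      also have "\<dots> = card {i. i < k' \<and> P (xs ! i)}"
        using card_less_Suc2[of "{i. P ((x # xs) ! i)}" k'] False e by simp
      finally show ?thesis using False IH Suc by simp
    qed
  qed
qed

definition posn :: "('a \<Rightarrow> bool) \<Rightarrow> 'a list \<Rightarrow> nat set" where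
  "posn P xs = {j \<in> {1..length xs}. P (xs ! (j - 1))}"

lemma posn_sub: "posn P xs \<subseteq> {1..length xs}"
  by (auto simp: posn_def)

lemma posn_compl: "posn isl w = {1..length w} - posn (\<lambda>x. \<not> isl x) w"
  by (auto simp: posn_def)

lemma posn_rank:
  assumes j: "j \<in> posn P xs"
  shows "rank (posn P xs) j = Suc (card {i. i < j - 1 \<and> P (xs ! i)})"
proof -
  have "{y \<in> posn P xs. y \<le> j} = insert j (Suc ` {i. i < j - 1 \<and> P (xs ! i)})"
  proof (intro set_eqI iffI)
    fix y assume y: "y \<in> {y \<in> posn P xs. y \<le> j}"
    show "y \<in> insert j (Suc ` {i. i < j - 1 \<and> P (xs ! i)})"
    proof (cases "y = j")
      case False
      then have "y - 1 < j - 1" "P (xs ! (y - 1))" "y = Suc (y - 1)" using y by (auto simp: posn_def)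
      then show ?thesis by blast
    qed simp
  qed (use j in \<open>auto simp: posn_def\<close>)
  moreover have "j \<notin> Suc ` {i. i < j - 1 \<and> P (xs ! i)}" by auto
  ultimately show ?thesis unfolding rank_def by (simp add: card_image)
qed

lemma posn_filter_nth:
  assumes j: "j \<in> posn P xs"
  shows "filter P xs ! (rank (posn P xs) j - 1) = xs ! (j - 1)"
  using filter_nth_card[of "j - 1" xs P] j posn_rank[OF j] by (auto simp: posn_def)

lemma posn_card: "card (posn P xs) = length (filter P xs)"
proof -
  have "posn P xs = Suc ` {i. i < length xs \<and> P (xs ! i)}"
  proof (intro set_eqI iffI)
    fix y assume "y \<in> posn P xs"
    then have "y - 1 < length xs" "P (xs ! (y - 1))" "y = Suc (y - 1)" by (auto simp: posn_def)
    then show "y \<in> Suc ` {i. i < length xs \<and> P (xs ! i)}" by blast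
  qed (auto simp: posn_def)
  then show ?thesis by (simp add: card_image length_filter_conv_card)
qed

lemma lists_proj:
  "w \<in> lists (Inl ` letters \<union> Inr ` letters) \<longleftrightarrow> projA w \<in> lists letters \<and> projB w \<in> lists letters"
proof (induction w)
  case (Cons x w)
  then show ?case by (cases x) (auto simp: projA_def projB_def)
qed (simp add: projA_def projB_def)

lemma projA_nth:
  assumes j: "j \<in> posn isl w"
  shows "projA w ! (rank (posn isl w) j - 1) = projl (w ! (j - 1))"
proof -
  have "rank (posn isl w) j \<in> {1..card (posn isl w)}"
    by (rule rank_range[OF finite_subset[OF posn_sub] j]) simp
  then have "rank (posn isl w) j - 1 < length (filter isl w)" using posn_card[of isl w] by auto
  then show ?thesis unfolding projA_def using posn_filter_nth[OF j] by simp
qed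

lemma projB_nth:
  assumes j: "j \<in> posn (\<lambda>x. \<not> isl x) w"
  shows "projB w ! (rank (posn (\<lambda>x. \<not> isl x) w) j - 1) = projr (w ! (j - 1))"
proof -
  have "rank (posn (\<lambda>x. \<not> isl x) w) j \<in> {1..card (posn (\<lambda>x. \<not> isl x) w)}"
    by (rule rank_range[OF finite_subset[OF posn_sub] j]) simp
  then have "rank (posn (\<lambda>x. \<not> isl x) w) j - 1 < length (filter (\<lambda>x. \<not> isl x) w)"
    using posn_card[of "\<lambda>x. \<not> isl x" w] by auto
  then show ?thesis unfolding projB_def using posn_filter_nth[OF j] by simp
qed

text \<open>Since no \<open>b \<prec> a\<close>, the positions of \<open>B\<close>-letters in an admissible word are stable.\<close>
lemma S_AB_stable:
  assumes p: "\<sigma> permutes {1..n}" and nz: "S_AB \<sigma> n w \<noteq> 0"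
  shows "stable \<sigma> (posn (\<lambda>x. \<not> isl x) w)"
  unfolding stable_def
proof
  have len: "length w = n" and ch: "\<forall>j\<in>{1..n}. precAB (w ! (j - 1)) (w ! (\<sigma> j - 1))"
    using nz unfolding S_AB_def by (auto split: if_splits)
  fix j assume j: "j \<in> posn (\<lambda>x. \<not> isl x) w"
  then have j1: "j \<in> {1..n}" "\<not> isl (w ! (j - 1))" using len by (auto simp: posn_def)
  have "precAB (w ! (j - 1)) (w ! (\<sigma> j - 1))" using ch j1(1) by blast
  then have "\<not> isl (w ! (\<sigma> j - 1))" using j1(2)
    by (cases "w ! (j - 1)"; cases "w ! (\<sigma> j - 1)") auto
  then show "\<sigma> j \<in> posn (\<lambda>x. \<not> isl x) w"
    using permutes_interval_facts(4)[OF p j1(1)] len by (auto simp: posn_def)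
qed

text \<open>The links of a stable position set \<open>U\<close> stay inside \<open>U\<close> (and inside its complement),
  so admissibility over \<open>A \<oplus> B\<close> is admissibility of the two subwords for the
  standardized restrictions of \<open>\<sigma>\<close>.\<close>
lemma S_AB_stable_split:
  assumes p: "\<sigma> permutes {1..n}" and len: "length w = n"
    and st: "stable \<sigma> (posn (\<lambda>x. \<not> isl x) w)"
  shows "(S_AB \<sigma> n w :: 'k::comm_ring_1) =
    S_words (std \<sigma> (posn isl w)) (card (posn isl w)) (projA w) *
    S_words (std \<sigma> (posn (\<lambda>x. \<not> isl x) w)) (card (posn (\<lambda>x. \<not> isl x) w)) (projB w)"
proof -
  let ?A = "posn isl w" and ?B = "posn (\<lambda>x. \<not> isl x) w"
  let ?link = "\<lambda>j. precAB (w ! (j - 1)) (w ! (\<sigma> j - 1))"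
  have Bsub: "?B \<subseteq> {1..n}" and Asub: "?A \<subseteq> {1..n}" using posn_sub len by blast+
  have Aeq: "?A = {1..n} - ?B" using posn_compl[of w] len by simp
  have stA: "stable \<sigma> ?A" unfolding Aeq by (rule stable_compl[OF p Bsub st])
  have linkA: "prec (projA w ! (rank ?A j - 1)) (projA w ! (rank ?A (\<sigma> j) - 1)) \<longleftrightarrow> ?link j"
    if j: "j \<in> ?A" for j
  proof -
    have sj: "\<sigma> j \<in> ?A" using stA j by (auto simp: stable_def)
    have "isl (w ! (j - 1))" "isl (w ! (\<sigma> j - 1))" using j sj by (auto simp: posn_def)
    then show ?thesis using projA_nth[OF j] projA_nth[OF sj]
      by (cases "w ! (j - 1)"; cases "w ! (\<sigma> j - 1)") auto
  qed
  have linkB: "prec (projB w ! (rank ?B j - 1)) (projB w ! (rank ?B (\<sigma> j) - 1)) \<longleftrightarrow> ?link j"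
    if j: "j \<in> ?B" for j
  proof -
    have sj: "\<sigma> j \<in> ?B" using st j by (auto simp: stable_def)
    have "\<not> isl (w ! (j - 1))" "\<not> isl (w ! (\<sigma> j - 1))" using j sj by (auto simp: posn_def)
    then show ?thesis using projB_nth[OF j] projB_nth[OF sj]
      by (cases "w ! (j - 1)"; cases "w ! (\<sigma> j - 1)") auto
  qed
  have links: "(\<forall>j\<in>{1..n}. ?link j) \<longleftrightarrow>
      (\<forall>j\<in>?A. prec (projA w ! (rank ?A j - 1)) (projA w ! (rank ?A (\<sigma> j) - 1))) \<and>
      (\<forall>j\<in>?B. prec (projB w ! (rank ?B j - 1)) (projB w ! (rank ?B (\<sigma> j) - 1)))"
    using Aeq Bsub linkA linkB by blast
  have "length (projA w) = card ?A" "length (projB w) = card ?B"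
    using posn_card[of isl w] posn_card[of "\<lambda>x. \<not> isl x" w] by (simp_all add: projA_def projB_def)
  then have "w \<in> lists (Inl ` letters \<union> Inr ` letters) \<and> length w = n \<and> (\<forall>j\<in>{1..n}. ?link j)
      \<longleftrightarrow> admissible (std \<sigma> ?A) (card ?A) (projA w) \<and> admissible (std \<sigma> ?B) (card ?B) (projB w)"
    unfolding admissible_std[OF finite_subset[OF Asub finite_atLeastAtMost]]
      admissible_std[OF finite_subset[OF Bsub finite_atLeastAtMost]] lists_proj links
    using len by blast
  then show ?thesis by (simp add: S_AB_def S_words_admissible)
qed

lemma S_AB_split:
  assumes p: "\<sigma> permutes {1..n}" and len: "length w = n"
  shows "(S_AB \<sigma> n w :: 'k::comm_ring_1) =
    (if stable \<sigma> (posn (\<lambda>x. \<not> isl x) w) then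
      S_words (std \<sigma> ({1..n} - posn (\<lambda>x. \<not> isl x) w)) (card ({1..n} - posn (\<lambda>x. \<not> isl x) w))
        (projA w) *
      S_words (std \<sigma> (posn (\<lambda>x. \<not> isl x) w)) (card (posn (\<lambda>x. \<not> isl x) w)) (projB w)
     else 0)"
  using S_AB_stable[OF p, of w] S_AB_stable_split[OF p len] posn_compl[of w] len by auto

lemma exists_word:
  "length u = length (filter id ps) \<Longrightarrow> length v = length (filter Not ps) \<Longrightarrow>
   \<exists>w. map isl w = ps \<and> projA w = u \<and> projB w = v"
proof (induction ps arbitrary: u v)
  case Nil then show ?case by (simp add: projA_def projB_def)
next
  case (Cons b ps)
  show ?case
  proof (cases b)
    case True
    then obtain a u' where u: "u = a # u'" "length u' = length (filter id ps)"
      using Cons.prems by (cases u) (auto simp: id_def)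
    obtain w where w: "map isl w = ps" "projA w = u'" "projB w = v"
      using Cons.IH[OF u(2)] Cons.prems True by auto
    show ?thesis using w u True by (intro exI[of _ "Inl a # w"]) (auto simp: projA_def projB_def)
  next
    case False
    then obtain a v' where v: "v = a # v'" "length v' = length (filter Not ps)"
      using Cons.prems by (cases v) auto
    obtain w where w: "map isl w = ps" "projA w = u" "projB w = v'"
      using Cons.IH[OF _ v(2)] Cons.prems False by auto
    show ?thesis using w v False by (intro exI[of _ "Inr a # w"]) (auto simp: projA_def projB_def)
  qed
qed

lemma word_inj:
  "map isl w1 = map isl w2 \<Longrightarrow> projA w1 = projA w2 \<Longrightarrow> projB w1 = projB w2 \<Longrightarrow> w1 = w2"
proof (induction w1 arbitrary: w2)
  case Nil then show ?case by simp
next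
  case (Cons x w1)
  then obtain y w2' where w2: "w2 = y # w2'" by (cases w2) auto
  show ?case using Cons.prems Cons.IH[of w2'] unfolding w2
    by (cases x; cases y) (auto simp: projA_def projB_def)
qed

text \<open>There are finitely many words with given subwords, so \<open>commute_image\<close> is a finite sum.\<close>
lemma word_set_finite: "finite {w. projA w = u \<and> projB w = v}"
proof (rule finite_subset)
  show "{w. projA w = u \<and> projB w = v} \<subseteq>
    {w. set w \<subseteq> Inl ` set u \<union> Inr ` set v \<and> length w = length u + length v}"
  proof
    fix w :: "(letter + letter) list" assume "w \<in> {w. projA w = u \<and> projB w = v}"
    hence w: "projA w = u" "projB w = v" by auto
    have "set w \<subseteq> Inl ` set u \<union> Inr ` set v"
    proof
      fix x assume xw: "x \<in> set w"
      show "x \<in> Inl ` set u \<union> Inr ` set v"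
      proof (cases x)
        case (Inl a)
        then have "a \<in> set (projA w)" using xw unfolding projA_def by force
        then show ?thesis using Inl w by simp
      next
        case (Inr a)
        then have "a \<in> set (projB w)" using xw unfolding projB_def by force
        then show ?thesis using Inr w by simp
      qed
    qed
    moreover have "length w = length u + length v" using w
      by (auto simp: projA_def projB_def sum_length_filter_compl)
    ultimately show "w \<in> {w. set w \<subseteq> Inl ` set u \<union> Inr ` set v \<and> length w = length u + length v}" by simp
  qed
  show "finite {w. set w \<subseteq> Inl ` set u \<union> Inr ` set v \<and> length w = length u + length v}"
    by (rule finite_lists_length_eq) simp
qed

text \<open>Reindexing by the set of \<open>B\<close>-positions: it is injective on words with fixed subwords \<open>u\<close>, \<open>v\<close> \<dots>\<close>
lemma interleavings_inj: "inj_on (posn (\<lambda>x. \<not> isl x)) {w. projA w = u \<and> projB w = v}"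
proof (rule inj_onI)
  fix w1 w2 assume w1: "w1 \<in> {w. projA w = u \<and> projB w = v}" and w2: "w2 \<in> {w. projA w = u \<and> projB w = v}"
    and e: "posn (\<lambda>x. \<not> isl x) w1 = posn (\<lambda>x. \<not> isl x) w2"
  have len: "length w = length u + length v" if "w \<in> {w. projA w = u \<and> projB w = v}" for w
  proof -
    have "projA w = u" "projB w = v" using that by auto
    then show ?thesis unfolding projA_def projB_def by (auto simp: sum_length_filter_compl)
  qed
  have isl_iff: "isl (w ! k) \<longleftrightarrow> Suc k \<notin> posn (\<lambda>x. \<not> isl x) w" if "k < length w" for w k
    using that unfolding posn_def by auto
  have "map isl w1 = map isl w2"
  proof (rule nth_equalityI)
    show "length (map isl w1) = length (map isl w2)" using len[OF w1] len[OF w2] by simp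
    fix k assume "k < length (map isl w1)"
    then show "map isl w1 ! k = map isl w2 ! k"
      using len[OF w1] len[OF w2] isl_iff[of k w1] isl_iff[of k w2] e by simp
  qed
  moreover have "projA w1 = projA w2" "projB w1 = projB w2" using w1 w2 by auto
  ultimately show "w1 = w2" by (rule word_inj)
qed

text \<open>\<dots> and its image on the words of length \<open>n\<close> consists of all subsets of \<open>[n]\<close> of the
  right size.\<close>
lemma interleavings_positions:
  "posn (\<lambda>x. \<not> isl x) ` {w. projA w = u \<and> projB w = v \<and> length w = n} =
    {U. U \<subseteq> {1..n} \<and> card U = length v \<and> card ({1..n} - U) = length u}"
proof
  show "posn (\<lambda>x. \<not> isl x) ` {w. projA w = u \<and> projB w = v \<and> length w = n} \<subseteq>
    {U. U \<subseteq> {1..n} \<and> card U = length v \<and> card ({1..n} - U) = length u}"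
  proof
    fix U assume "U \<in> posn (\<lambda>x. \<not> isl x) ` {w. projA w = u \<and> projB w = v \<and> length w = n}"
    then obtain w where w: "projA w = u" "projB w = v" "length w = n"
      and U: "U = posn (\<lambda>x. \<not> isl x) w" by blast
    have "{1..n} - U = posn isl w" using posn_compl[of w] w(3) U by simp
    then show "U \<in> {U. U \<subseteq> {1..n} \<and> card U = length v \<and> card ({1..n} - U) = length u}"
      using posn_sub[of _ w] posn_card[of _ w] w U by (auto simp: projA_def projB_def)
  qed
next
  show "{U. U \<subseteq> {1..n} \<and> card U = length v \<and> card ({1..n} - U) = length u} \<subseteq>
    posn (\<lambda>x. \<not> isl x) ` {w. projA w = u \<and> projB w = v \<and> length w = n}"
  proof
    fix U assume "U \<in> {U. U \<subseteq> {1..n} \<and> card U = length v \<and> card ({1..n} - U) = length u}"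
    then have Us: "U \<subseteq> {1..n}" and lv: "card U = length v" and lu: "card ({1..n} - U) = length u"
      by auto
    define ps where "ps = map (\<lambda>j. j \<notin> U) [1..<n+1]"
    have "length (filter id ps) = length (filter (\<lambda>j. j \<notin> U) [1..<n+1])"
      unfolding ps_def by (simp add: filter_map o_def)
    also have "\<dots> = card {j \<in> {1..<n+1}. j \<notin> U}"
      by (subst distinct_card[symmetric]) (auto simp del: upt_Suc)
    also have "{j \<in> {1..<n+1}. j \<notin> U} = {1..n} - U" by auto
    finally have f1: "length u = length (filter id ps)" using lu by (simp add: id_def)
    have "length (filter Not ps) = length (filter (\<lambda>j. j \<in> U) [1..<n+1])"
      unfolding ps_def by (simp add: filter_map o_def)
    also have "\<dots> = card {j \<in> {1..<n+1}. j \<in> U}"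
      by (subst distinct_card[symmetric]) (auto simp del: upt_Suc)
    also have "{j \<in> {1..<n+1}. j \<in> U} = U" using Us by auto
    finally have f2: "length v = length (filter Not ps)" using lv by simp
    obtain w where w: "map isl w = ps" "projA w = u" "projB w = v"
      using exists_word[OF f1 f2] by blast
    have l: "length w = n" using arg_cong[OF w(1), of length] unfolding ps_def by simp
    have "isl (w ! (j - 1)) \<longleftrightarrow> j \<notin> U" if j: "j \<in> {1..n}" for j
    proof -
      have "j - 1 < length w" using j l by auto
      then have "isl (w ! (j - 1)) = map isl w ! (j - 1)" by simp
      also have "\<dots> = (j \<notin> U)" unfolding w(1) ps_def by (rule map_upt_nth[OF j])
      finally show ?thesis .
    qed
    then have "U = posn (\<lambda>x. \<not> isl x) w" unfolding posn_def using l Us by auto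
    moreover have "w \<in> {w. projA w = u \<and> projB w = v \<and> length w = n}" using w l by simp
    ultimately show "U \<in> posn (\<lambda>x. \<not> isl x) ` {w. projA w = u \<and> projB w = v \<and> length w = n}"
      by (rule image_eqI)
  qed
qed

lemma orbit_of_eq:
  assumes p: "\<sigma> permutes {1..n}"
  shows "orbit_of \<sigma> x = orbit \<sigma> x"
proof -
  have "permutation \<sigma>" using p by (intro permutes_imp_permutation) auto
  then show ?thesis unfolding orbit_of_def by (simp add: orbit_altdef_permutation)
qed

lemma orbit_same:
  assumes p: "\<sigma> permutes {1..n}" and y: "y \<in> orbit_of \<sigma> x"
  shows "orbit_of \<sigma> y = orbit_of \<sigma> x"
proof -
  have pm: "permutation \<sigma>" using p by (intro permutes_imp_permutation) auto
  have y': "y \<in> orbit \<sigma> x" using y orbit_of_eq[OF p] by simp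
  have xx: "x \<in> orbit \<sigma> x" by (rule permutation_self_in_orbit[OF pm])
  have xy: "x \<in> orbit \<sigma> y" by (rule orbit_swap[OF xx y'])
  have "orbit \<sigma> y = orbit \<sigma> x"
    using orbit_trans[OF _ y'] orbit_trans[OF _ xy] by blast
  then show ?thesis using orbit_of_eq[OF p] by simp
qed

lemma self_in_orbit_of: "x \<in> orbit_of \<sigma> x"
  unfolding orbit_of_def by (metis (mono_tags, lifting) funpow_0 mem_Collect_eq)

lemma orbit_of_sub:
  assumes p: "\<sigma> permutes {1..n}" and x: "x \<in> {1..n}"
  shows "orbit_of \<sigma> x \<subseteq> {1..n}"
  using permutes_in_funpow_image[OF p x] unfolding orbit_of_def by blast

lemma orbit_of_stable: "stable \<sigma> (orbit_of \<sigma> x)"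
  unfolding stable_def orbit_of_def
proof
  fix j assume "j \<in> {(\<sigma> ^^ k) x |k. True}"
  then obtain k where "j = (\<sigma> ^^ k) x" by blast
  then have "\<sigma> j = (\<sigma> ^^ Suc k) x" by simp
  then show "\<sigma> j \<in> {(\<sigma> ^^ k) x |k. True}" by blast
qed

lemma orbit_of_in_stable:
  assumes st: "stable \<sigma> U" and x: "x \<in> U"
  shows "orbit_of \<sigma> x \<subseteq> U"
proof
  fix j assume "j \<in> orbit_of \<sigma> x"
  then obtain k where j: "j = (\<sigma> ^^ k) x" unfolding orbit_of_def by blast
  have "(\<sigma> ^^ k) x \<in> U" by (induction k) (use x st in \<open>auto simp: stable_def\<close>)
  then show "j \<in> U" using j by simp
qed

lemma cycles_sub: "\<sigma> permutes {1..n} \<Longrightarrow> C \<subseteq> cycles \<sigma> n \<Longrightarrow> \<Union>C \<subseteq> {1..n}"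
  unfolding cycles_def using orbit_of_sub by blast

lemma cycles_stable: "C \<subseteq> cycles \<sigma> n \<Longrightarrow> stable \<sigma> (\<Union>C)"
  unfolding cycles_def stable_def using orbit_of_stable[unfolded stable_def] by blast

text \<open>Cycles are nonempty and pairwise disjoint, so distinct sets of cycles have distinct unions.\<close>
lemma cycles_disj:
  assumes p: "\<sigma> permutes {1..n}" and c1: "c1 \<in> cycles \<sigma> n" and c2: "c2 \<in> cycles \<sigma> n"
    and y: "y \<in> c1" "y \<in> c2"
  shows "c1 = c2"
proof -
  obtain x1 where x1: "c1 = orbit_of \<sigma> x1" using c1 unfolding cycles_def by blast
  obtain x2 where x2: "c2 = orbit_of \<sigma> x2" using c2 unfolding cycles_def by blast
  show ?thesis using orbit_same[OF p, of y x1] orbit_same[OF p, of y x2] x1 x2 y by simp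
qed

lemma cycles_nonempty: "c \<in> cycles \<sigma> n \<Longrightarrow> c \<noteq> {}"
  unfolding cycles_def using self_in_orbit_of by blast

lemma cycles_Union_inj:
  assumes p: "\<sigma> permutes {1..n}"
  shows "inj_on Union (Pow (cycles \<sigma> n))"
proof (rule inj_onI)
  fix C1 C2 assume C1: "C1 \<in> Pow (cycles \<sigma> n)" and C2: "C2 \<in> Pow (cycles \<sigma> n)" and e: "\<Union>C1 = \<Union>C2"
  have *: "C \<subseteq> D" if C: "C \<subseteq> cycles \<sigma> n" and D: "D \<subseteq> cycles \<sigma> n" and e: "\<Union>C = \<Union>D" for C D
  proof
    fix c assume c: "c \<in> C"
    obtain x where x: "x \<in> c" using cycles_nonempty C c by blast
    then obtain d where d: "d \<in> D" "x \<in> d" using e c by blast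
    have "c = d" using cycles_disj[OF p, of c d x] C D c d x by blast
    then show "c \<in> D" using d by simp
  qed
  show "C1 = C2" using *[of C1 C2] *[of C2 C1] C1 C2 e by auto
qed

lemma stable_Union_cycles:
  assumes st: "stable \<sigma> U" and U: "U \<subseteq> {1..n}"
  shows "\<Union>{c \<in> cycles \<sigma> n. c \<subseteq> U} = U"
proof
  show "\<Union>{c \<in> cycles \<sigma> n. c \<subseteq> U} \<subseteq> U" by blast
  show "U \<subseteq> \<Union>{c \<in> cycles \<sigma> n. c \<subseteq> U}"
  proof
    fix x assume x: "x \<in> U"
    have "orbit_of \<sigma> x \<in> cycles \<sigma> n" using x U unfolding cycles_def by blast
    moreover have "orbit_of \<sigma> x \<subseteq> U" by (rule orbit_of_in_stable[OF st x])
    ultimately show "x \<in> \<Union>{c \<in> cycles \<sigma> n. c \<subseteq> U}" using self_in_orbit_of[of x \<sigma>] by blast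
  qed
qed

lemma cycle_unions: "\<sigma> permutes {1..n} \<Longrightarrow> Union ` Pow (cycles \<sigma> n) = {U. U \<subseteq> {1..n} \<and> stable \<sigma> U}"
proof (intro set_eqI iffI)
  fix U assume "\<sigma> permutes {1..n}" "U \<in> Union ` Pow (cycles \<sigma> n)"
  then show "U \<in> {U. U \<subseteq> {1..n} \<and> stable \<sigma> U}" using cycles_sub cycles_stable by blast
next
  fix U assume "U \<in> {U. U \<subseteq> {1..n} \<and> stable \<sigma> U}"
  then have "U = \<Union>{c \<in> cycles \<sigma> n. c \<subseteq> U}" using stable_Union_cycles by blast
  then show "U \<in> Union ` Pow (cycles \<sigma> n)" by blast
qed

definition split_term :: "(nat \<Rightarrow> nat) \<Rightarrow> nat \<Rightarrow> letter list \<Rightarrow> letter list \<Rightarrow> nat set \<Rightarrow> 'k::comm_ring_1" where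
  "split_term \<sigma> n u v U =
    S_words (std \<sigma> ({1..n} - U)) (card ({1..n} - U)) u * S_words (std \<sigma> U) (card U) v"

lemma split_term_zero:
  assumes "\<not> (card U = length v \<and> card ({1..n} - U) = length u)"
  shows "split_term \<sigma> n u v U = 0"
  using assms by (auto simp: split_term_def S_words_admissible admissible_def)

text \<open>Left-hand side of (iv): reindexing the words by their sets of \<open>B\<close>-positions.\<close>
lemma commute_image_S_AB:
  assumes p: "\<sigma> permutes {1..n}"
  shows "commute_image (S_AB \<sigma> n) u v = (\<Sum>U \<in> {U. U \<subseteq> {1..n} \<and> stable \<sigma> U \<and>
      card U = length v \<and> card ({1..n} - U) = length u}. split_term \<sigma> n u v U :: 'k::comm_ring_1)"
proof -
  let ?B = "posn (\<lambda>x. \<not> isl x)"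
  let ?h = "\<lambda>U. if stable \<sigma> U then split_term \<sigma> n u v U else (0::'k)"
  define Adm where "Adm = {U. U \<subseteq> {1..n} \<and> card U = length v \<and> card ({1..n} - U) = length u}"
  define W where "W = {w. projA w = u \<and> projB w = v \<and> length w = n}"
  have "commute_image (S_AB \<sigma> n) u v = sum (S_AB \<sigma> n) W"
    unfolding commute_image_def W_def
    by (rule sum.mono_neutral_right) (auto simp: word_set_finite S_AB_def)
  also have "\<dots> = (\<Sum>w\<in>W. ?h (?B w))"
    by (rule sum.cong) (auto simp: W_def split_term_def S_AB_split[OF p])
  also have "\<dots> = sum ?h Adm"
  proof -
    have inj: "inj_on ?B W" unfolding W_def by (rule inj_on_subset[OF interleavings_inj[of u v]]) auto
    have "?B ` W = Adm" unfolding W_def Adm_def by (rule interleavings_positions)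
    then show ?thesis using sum.reindex[OF inj, of ?h] by (simp add: o_def)
  qed
  also have "\<dots> = sum (split_term \<sigma> n u v) {U \<in> Adm. stable \<sigma> U}"
    by (rule sum.inter_filter[symmetric]) (simp add: Adm_def)
  finally show ?thesis by (simp add: Adm_def conj_ac)
qed

text \<open>Right-hand side of (iv): reindexing sets of cycles by their unions.\<close>
lemma sum_cycles_split_term:
  assumes p: "\<sigma> permutes {1..n}"
  shows "(\<Sum>C\<in>Pow (cycles \<sigma> n).
       (S (std \<sigma> ({1..n} - \<Union>C)) (card ({1..n} - \<Union>C)) u :: 'k::comm_ring_1) *
       S (std \<sigma> (\<Union>C)) (card (\<Union>C)) v)
    = (\<Sum>U \<in> {U. U \<subseteq> {1..n} \<and> stable \<sigma> U}. split_term \<sigma> n u v U)"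
proof -
  have "(\<Sum>C\<in>Pow (cycles \<sigma> n).
       (S (std \<sigma> ({1..n} - \<Union>C)) (card ({1..n} - \<Union>C)) u :: 'k) * S (std \<sigma> (\<Union>C)) (card (\<Union>C)) v)
    = (\<Sum>C\<in>Pow (cycles \<sigma> n). split_term \<sigma> n u v (\<Union>C))"
  proof (rule sum.cong)
    fix C assume "C \<in> Pow (cycles \<sigma> n)"
    then have sub: "\<Union>C \<subseteq> {1..n}" and st: "stable \<sigma> (\<Union>C)"
      using cycles_sub[OF p] cycles_stable by blast+
    show "S (std \<sigma> ({1..n} - \<Union>C)) (card ({1..n} - \<Union>C)) u * S (std \<sigma> (\<Union>C)) (card (\<Union>C)) v
        = split_term \<sigma> n u v (\<Union>C)"
      unfolding split_term_def S_eq_S_words[OF std_permutes[OF p Diff_subset stable_compl[OF p sub st]]]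
        S_eq_S_words[OF std_permutes[OF p sub st]] ..
  qed simp
  also have "\<dots> = (\<Sum>U \<in> {U. U \<subseteq> {1..n} \<and> stable \<sigma> U}. split_term \<sigma> n u v U)"
    using sum.reindex[OF cycles_Union_inj[OF p], of "split_term \<sigma> n u v :: nat set \<Rightarrow> 'k"] cycle_unions[OF p]
    by (simp add: o_def)
  finally show ?thesis .
qed

text \<open>Part (iv): both sides are sums of \<open>split_term\<close> over stable sets of positions, which
  agree since the terms with the wrong cardinalities vanish.\<close>
lemma S_coproduct:
  assumes p: "\<sigma> permutes {1..n}"
  shows "commute_image (S_AB \<sigma> n) u v =
    (\<Sum>C\<in>Pow (cycles \<sigma> n).
       (S (std \<sigma> ({1..n} - \<Union>C)) (card ({1..n} - \<Union>C)) u :: 'k::comm_ring_1) *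
       S (std \<sigma> (\<Union>C)) (card (\<Union>C)) v)"
  unfolding commute_image_S_AB[OF p] sum_cycles_split_term[OF p]
proof (rule sum.mono_neutral_left)
  show "finite {U. U \<subseteq> {1..n} \<and> stable \<sigma> U}"
    by (rule finite_subset[of _ "Pow {1..n}"]) auto
qed (auto intro: split_term_zero)

theorem theorem4p1:
  fixes dummy :: "'k::field itself"
  shows
  "(\<forall>n \<sigma> w. \<sigma> permutes {1..n} \<longrightarrow> (S \<sigma> n w :: 'k) = S_words \<sigma> n w)
   \<and> (\<forall>(F :: (nat \<times> (nat \<Rightarrow> nat)) set) (c :: nat \<times> (nat \<Rightarrow> nat) \<Rightarrow> 'k).
        finite F \<and> F \<subseteq> {(n, \<sigma>). \<sigma> permutes {1..n}} \<and>
        (\<forall>w. (\<Sum>(n, \<sigma>)\<in>F. c (n, \<sigma>) * S \<sigma> n w) = 0)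
        \<longrightarrow> (\<forall>p\<in>F. c p = 0))
   \<and> (\<forall>n m \<sigma> \<tau>. \<sigma> permutes {1..n} \<and> \<tau> permutes {1..m} \<longrightarrow>
        series_mult (S \<sigma> n) (S \<tau> m) = (S (shift_concat \<sigma> n \<tau> m) (n + m) :: letter list \<Rightarrow> 'k))
   \<and> (\<forall>n \<sigma> u v. \<sigma> permutes {1..n} \<longrightarrow>
        commute_image (S_AB \<sigma> n) u v =
        (\<Sum>C\<in>Pow (cycles \<sigma> n).
           (S (std \<sigma> ({1..n} - \<Union>C)) (card ({1..n} - \<Union>C)) u :: 'k) *
           S (std \<sigma> (\<Union>C)) (card (\<Union>C)) v))"
proof (intro conjI allI impI)
  show "(S \<sigma> n w :: 'k) = S_words \<sigma> n w" if "\<sigma> permutes {1..n}" for n \<sigma> w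
    using that by (rule S_eq_S_words)
  show "\<forall>p\<in>F. c p = 0"
    if "finite F \<and> F \<subseteq> {(n, \<sigma>). \<sigma> permutes {1..n}} \<and> (\<forall>w. (\<Sum>(n, \<sigma>)\<in>F. c (n, \<sigma>) * S \<sigma> n w) = 0)"
    for F and c :: "nat \<times> (nat \<Rightarrow> nat) \<Rightarrow> 'k"
    using that S_linearly_independent[of F c] by blast
  show "series_mult (S \<sigma> n) (S \<tau> m) = (S (shift_concat \<sigma> n \<tau> m) (n + m) :: letter list \<Rightarrow> 'k)"
    if "\<sigma> permutes {1..n} \<and> \<tau> permutes {1..m}" for n m \<sigma> \<tau>
    using that S_product by blast
  show "commute_image (S_AB \<sigma> n) u v = (\<Sum>C\<in>Pow (cycles \<sigma> n).
      (S (std \<sigma> ({1..n} - \<Union>C)) (card ({1..n} - \<Union>C)) u :: 'k) * S (std \<sigma> (\<Union>C)) (card (\<Union>C)) v)"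
    if "\<sigma> permutes {1..n}" for n \<sigma> u v
    using that by (rule S_coproduct)
qed

end
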